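(* Let $n\ge2$. For pairs $(\alpha,\beta)\in\{0,\dots,2^n-1\}^2$ define $y_{\alpha,\beta}(x)=(\alpha\dotplus x)\oplus(\beta\dotplus x)$ for $x\in\{0,\dots,2^n-1\}$. Say that a finite list of pairs $(\alpha^{(1)},\beta^{(1)}),\dots,(\alpha^{(m)},\beta^{(m)})$ determines $x$ modulo $2^{n-1}$ if for all $x,x'\in\{0,\dots,2^n-1\}$, $y_{\alpha^{(j)},\beta^{(j)}}(x)=y_{\alpha^{(j)},\beta^{(j)}}(x')$ for all $j=1,\dots,m$ implies $x\equiv x'\pmod{2^{n-1}}$. Let $m(n)$ be the least $m$ for which such a list of $m$ pairs exists. Then $m(2)=1$ and $m(n)=2$ for all $n>2$.
   Context: $a\dotplus b=(a+b)\bmod 2^n$; $\oplus$ is bitwise XOR of $n$-bit integers. *)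

theory Defs
  imports Main
begin

definition yab :: "nat \<Rightarrow> nat \<Rightarrow> nat \<Rightarrow> nat \<Rightarrow> nat" where
  "yab n a b x = xor ((a + x) mod 2 ^ n) ((b + x) mod 2 ^ n)"

definition determines :: "nat \<Rightarrow> (nat \<times> nat) list \<Rightarrow> bool" where
  "determines n ps \<longleftrightarrow>
     (\<forall>(a, b) \<in> set ps. a < 2 ^ n \<and> b < 2 ^ n) \<and>
     (\<forall>x < 2 ^ n. \<forall>x' < 2 ^ n.
        (\<forall>(a, b) \<in> set ps. yab n a b x = yab n a b x') \<longrightarrow>
        x mod 2 ^ (n - 1) = x' mod 2 ^ (n - 1))"

definition mmin :: "nat \<Rightarrow> nat" where
  "mmin n = (LEAST m. \<exists>ps. length ps = m \<and> determines n ps)"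

end

theory Submission
  imports Defs
begin

(* Write c_j(x,d) for the carry into bit j of x + d.  Then bit j of
   y_{0,d}(x) = x XOR (x + d)  (mod 2^n) is  d_j XOR c_j(x,d), and the carries obey the
   majority recurrence c_{j+1} = (d_j = c_j ? c_j : x_j).  Hence, if the low i bits of x
   are known (so c_i is known) and d_i <> c_i, then bit i+1 of y_{0,d}(x) reveals x_i.
   A list of pairs (0,d) therefore determines x mod 2^(n-1) as soon as, for every x and
   every i < n-1, some d in the list has d_i <> c_i(x,d).  For n = 2 the single d = 1
   suffices; for n > 2 the two numbers D = 0101...01 (binary) and 2D suffice.

   For a single pair (a,b) there are
   x < 4 and j < 2 such that bit j is clear in both a + x and b + x; then adding 2^j to x
   flips bit j of both summands without carry, so y_{a,b}(x + 2^j) = y_{a,b}(x), although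
   x and x + 2^j differ modulo 2^(n-1) once n > 2. *)

definition carry :: "nat \<Rightarrow> nat \<Rightarrow> nat \<Rightarrow> bool" where
  "carry x d j \<longleftrightarrow> 2 ^ j \<le> x mod 2 ^ j + d mod 2 ^ j"

lemma carry_div:
  "(x mod 2 ^ j + d mod 2 ^ j) div 2 ^ j = of_bool (carry x d j)"
proof (cases "carry x d j")
  case True
  have "x mod 2 ^ j < (2::nat) ^ j" "d mod 2 ^ j < (2::nat) ^ j" by simp_all
  then have "x mod 2 ^ j + d mod 2 ^ j - 2 ^ j < (2::nat) ^ j" by linarith
  with True show ?thesis unfolding carry_def by (simp add: le_div_geq)
qed (simp add: carry_def)

lemma bit_add_carry: "bit (x + d) j = (bit x j \<noteq> (bit d j \<noteq> carry x d j))"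
proof -
  have sum: "x + d = (x mod 2 ^ j + d mod 2 ^ j) + (x div 2 ^ j + d div 2 ^ j) * 2 ^ j"
    by (simp add: algebra_simps)
  have "(x + d) div 2 ^ j = (x mod 2 ^ j + d mod 2 ^ j) div 2 ^ j + (x div 2 ^ j + d div 2 ^ j)"
    by (subst sum) simp
  then have "(x + d) div 2 ^ j = of_bool (carry x d j) + (x div 2 ^ j + d div 2 ^ j)"
    by (simp only: carry_div)
  then show ?thesis by (cases "carry x d j") (auto simp: bit_iff_odd)
qed

lemma mod_pow_Suc: "(x::nat) mod 2 ^ Suc j = x mod 2 ^ j + 2 ^ j * of_bool (bit x j)"
  using take_bit_Suc_from_most[of j x] by (simp only: take_bit_eq_mod add.commute)

text \<open>Carry recurrence: the next carry is the majority of x_j, d_j and the current carry.\<close>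
lemma carry_Suc:
  "carry x d (Suc j) = (if bit d j = carry x d j then carry x d j else bit x j)"
proof -
  define r where "r = (x mod 2 ^ j + d mod 2 ^ j) mod 2 ^ j"
  have r: "r < (2::nat) ^ j" by (simp add: r_def)
  have low: "x mod 2 ^ j + d mod 2 ^ j = 2 ^ j * of_bool (carry x d j) + r"
    using carry_div[of x j d] div_mult_mod_eq[of "x mod 2 ^ j + d mod 2 ^ j" "2 ^ j"]
    by (simp add: r_def mult.commute)
  have "carry x d (Suc j) \<longleftrightarrow>
      2 * 2 ^ j \<le> 2 ^ j * of_bool (carry x d j) + r + 2 ^ j * (of_bool (bit x j) + of_bool (bit d j))"
    using low unfolding carry_def[of x d "Suc j"] mod_pow_Suc by (simp add: algebra_simps)
  also have "\<dots> \<longleftrightarrow> (if bit d j = carry x d j then carry x d j else bit x j)"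
    using r by (cases "carry x d j"; cases "bit x j"; cases "bit d j") simp_all
  finally show ?thesis .
qed

lemma bit_yab_zero:
  assumes "j < n"
  shows "bit (yab n 0 d x) j = (bit d j \<noteq> carry x d j)"
  using assms unfolding yab_def
  by (auto simp add: bit_xor_iff take_bit_eq_mod[symmetric] bit_take_bit_iff
      bit_add_carry[of x d] add.commute[of d x])

text \<open>If x and x' agree below bit i, have equal y_{0,d}-values, and d_i differs from the
  carry into bit i, then x and x' also agree at bit i (read off from bit i + 1 of y).\<close>
lemma bit_recovered:
  assumes "Suc i < n" and low: "x mod 2 ^ i = x' mod 2 ^ i"
    and y: "yab n 0 d x = yab n 0 d x'" and d: "bit d i \<noteq> carry x d i"
  shows "bit x i = bit x' i"
proof -
  have same_carry: "carry x d i = carry x' d i" using low by (simp add: carry_def)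
  have "carry x d (Suc i) = carry x' d (Suc i)"
    using bit_yab_zero[OF assms(1), of d x] bit_yab_zero[OF assms(1), of d x'] y by auto
  then show ?thesis using d same_carry by (simp add: carry_Suc split: if_splits)
qed

lemma determines_zero_pairs:
  assumes range: "\<forall>d \<in> set ds. d < 2 ^ n"
    and witness: "\<And>x i. Suc i < n \<Longrightarrow> \<exists>d \<in> set ds. bit d i \<noteq> carry x d i"
  shows "determines n (map (Pair 0) ds)"
  unfolding determines_def
proof (intro conjI allI impI)
  show "\<forall>(a, b) \<in> set (map (Pair (0::nat)) ds). a < 2 ^ n \<and> b < 2 ^ n" using range by auto
  fix x x' :: nat
  assume "\<forall>(a, b) \<in> set (map (Pair 0) ds). yab n a b x = yab n a b x'"
  then have y: "\<And>d. d \<in> set ds \<Longrightarrow> yab n 0 d x = yab n 0 d x'" by auto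
  have "i \<le> n - 1 \<Longrightarrow> x mod 2 ^ i = x' mod 2 ^ i" for i
  proof (induction i)
    case (Suc i)
    then have i: "Suc i < n" and low: "x mod 2 ^ i = x' mod 2 ^ i" by simp_all
    obtain d where "d \<in> set ds" "bit d i \<noteq> carry x d i" using witness[OF i] by blast
    then have "bit x i = bit x' i" using bit_recovered[OF i low] y by blast
    then show ?case using low by (simp only: mod_pow_Suc)
  qed simp
  then show "x mod 2 ^ (n - 1) = x' mod 2 ^ (n - 1)" by simp
qed

text \<open>If D has bit 0 set and its bits alternate below L, then at every position i < L
  one of D and 2D differs from its carry: for i > 0 their bits at i differ, while the
  carry for the one with bit i - 1 set dominates the carry for the other.\<close>
lemma alternating_carry_witness:
  assumes "bit D 0" and alt: "\<And>i. 0 < i \<Longrightarrow> i < L \<Longrightarrow> bit D i \<noteq> bit D (i - 1)"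
    and "i < L"
  shows "bit D i \<noteq> carry x D i \<or> bit (2 * D) i \<noteq> carry x (2 * D) i"
proof (cases i)
  case 0
  then show ?thesis using assms(1) by (simp add: carry_def)
next
  case (Suc k)
  have differ: "bit D (Suc k) \<noteq> bit D k" using alt[of "Suc k"] assms(3) Suc by simp
  have double_low: "(2 * D) mod 2 ^ Suc k = 2 * (D mod 2 ^ k)"
    using mod_mult_mult1[of 2 D "2 ^ k"] by simp
  have double_bit: "bit (2 * D) (Suc k) = bit D k" by (simp add: bit_double_iff)
  have "D mod 2 ^ k < (2::nat) ^ k" by simp
  then have "if bit D k then carry x (2 * D) (Suc k) \<longrightarrow> carry x D (Suc k)
             else carry x D (Suc k) \<longrightarrow> carry x (2 * D) (Suc k)"
    unfolding carry_def double_low mod_pow_Suc[of D] by auto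
  then show ?thesis using differ double_bit Suc by (auto split: if_splits)
qed

fun alt :: "nat \<Rightarrow> nat" where
  "alt 0 = 0"
| "alt (Suc k) = 1 + 4 * alt k"

lemma bit_alt: "bit (alt k) i = (even i \<and> i < 2 * k)"
proof (induction k arbitrary: i)
  case (Suc k)
  show ?case
  proof (cases "i < 2")
    case True
    then show ?thesis by (auto simp: bit_iff_odd less_2_cases_iff)
  next
    case False
    then obtain i' where i': "i = Suc (Suc i')" by (metis add_2_eq_Suc le_add_diff_inverse not_less)
    have "(1 + 4 * alt k) div 2 div 2 = alt k" by simp
    then show ?thesis using i' Suc.IH[of i'] by (simp add: bit_Suc)
  qed
qed simp

lemma double_alt_less: "2 * alt k < 4 ^ k"
  by (induction k) auto

lemma determines_alternating_pair:
  assumes "n \<ge> 3"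
  shows "determines n (map (Pair 0) [alt (n div 2), 2 * alt (n div 2)])"
proof (rule determines_zero_pairs)
  let ?D = "alt (n div 2)"
  have "2 * ?D < 2 ^ (2 * (n div 2))" using double_alt_less by (simp add: power_mult)
  also have "\<dots> \<le> 2 ^ n" by (rule power_increasing) auto
  finally show "\<forall>d \<in> set [?D, 2 * ?D]. d < 2 ^ n" by auto
  fix x i assume "Suc i < n"
  then have "bit ?D i \<noteq> carry x ?D i \<or> bit (2 * ?D) i \<noteq> carry x (2 * ?D) i"
    using assms by (intro alternating_carry_witness[where L = "n - 1"]) (auto simp: bit_alt)
  then show "\<exists>d \<in> set [?D, 2 * ?D]. bit d i \<noteq> carry x d i" by auto
qed

lemma determines_two_single: "determines 2 (map (Pair 0) [1])"
  by (rule determines_zero_pairs) (auto simp: carry_def bit_0)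

lemma determinesD:
  assumes "determines n ps" "x < 2 ^ n" "x' < 2 ^ n"
    "\<forall>(a, b) \<in> set ps. yab n a b x = yab n a b x'"
  shows "x mod 2 ^ (n - 1) = x' mod 2 ^ (n - 1)"
  using assms unfolding determines_def by blast

lemma not_determines_Nil:
  assumes "n \<ge> 2"
  shows "\<not> determines n []"
proof
  assume "determines n []"
  moreover have "(1::nat) < 2 ^ n" using assms by (intro one_less_power) auto
  ultimately have "0 mod 2 ^ (n - 1) = 1 mod (2::nat) ^ (n - 1)"
    by (intro determinesD) auto
  moreover have "(1::nat) < 2 ^ (n - 1)" using assms by (intro one_less_power) auto
  ultimately show False by simp
qed

lemma take_bit_add_clear_bit:
  assumes "j < n" "\<not> bit (p::nat) j"
  shows "take_bit n (p + 2 ^ j) = xor (take_bit n p) (2 ^ j)"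
proof -
  have "and p (2 ^ j) = 0"
    by (rule bit_eqI) (use assms(2) in \<open>auto simp: bit_and_iff bit_exp_iff\<close>)
  then have "p + 2 ^ j = xor p (2 ^ j)" by (rule disjunctive_add_eq_xor)
  then show ?thesis using assms(1) by simp
qed

lemma yab_collision:
  assumes "j < n" "\<not> bit (a + x) j" "\<not> bit (b + x) j"
  shows "yab n a b (x + 2 ^ j) = yab n a b x"
proof -
  have "yab n a b (x + 2 ^ j) = xor (take_bit n (a + x + 2 ^ j)) (take_bit n (b + x + 2 ^ j))"
    by (simp add: yab_def take_bit_eq_mod add.assoc)
  also have "\<dots> = xor (xor (take_bit n (a + x)) (2 ^ j)) (xor (take_bit n (b + x)) (2 ^ j))"
    using take_bit_add_clear_bit[OF assms(1,2)] take_bit_add_clear_bit[OF assms(1,3)] by simp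
  also have "\<dots> = xor (take_bit n (a + x)) (take_bit n (b + x))" by (simp add: ac_simps)
  also have "\<dots> = yab n a b x" by (simp add: yab_def take_bit_eq_mod)
  finally show ?thesis .
qed

lemma common_clear_bit: "\<exists>x < 4. \<exists>j < 2. \<not> bit (a + x) j \<and> \<not> bit ((b::nat) + x) j"
proof -
  have "\<exists>x < 4. (even (a + x) \<and> even (b + x)) \<or> (even ((a + x) div 2) \<and> even ((b + x) div 2))"
    by presburger
  then obtain x where "x < 4"
    "(even (a + x) \<and> even (b + x)) \<or> (even ((a + x) div 2) \<and> even ((b + x) div 2))"
    by blast
  moreover have "bit p 0 = odd p" "bit p 1 = odd (p div 2)" for p :: nat
    by (simp_all add: bit_0 bit_iff_odd)
  moreover have "(0::nat) < 2" "(1::nat) < 2" by simp_all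
  ultimately show ?thesis by blast
qed

lemma not_determines_single:
  assumes "n \<ge> 3"
  shows "\<not> determines n [(a, b)]"
proof
  assume det: "determines n [(a, b)]"
  obtain x j where x: "x < 4" and j: "j < 2" and clear: "\<not> bit (a + x) j" "\<not> bit (b + x) j"
    using common_clear_bit by blast
  have pow_j: "0 < (2::nat) ^ j" "(2::nat) ^ j \<le> 2" using j by (auto simp: less_2_cases_iff)
  have "(8::nat) \<le> 2 ^ n" using power_increasing[of 3 n "2::nat"] assms by simp
  then have "x + 2 ^ j < 2 ^ n" using x pow_j by linarith
  moreover have "yab n a b (x + 2 ^ j) = yab n a b x"
    using assms j clear by (intro yab_collision) auto
  ultimately have "(x + 2 ^ j) mod 2 ^ (n - 1) = x mod 2 ^ (n - 1)"
    by (intro determinesD[OF det]) auto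
  then have "2 ^ (n - 1) dvd (2::nat) ^ j" by (simp add: mod_eq_dvd_iff_nat)
  moreover have "(4::nat) \<le> 2 ^ (n - 1)" using power_increasing[of 2 "n - 1" "2::nat"] assms by simp
  ultimately show False using pow_j dvd_imp_le[of "2 ^ (n - 1)" "(2::nat) ^ j"] by linarith
qed

lemma mmin_eqI:
  assumes "determines n ps" "length ps = k"
    and "\<And>qs. length qs < k \<Longrightarrow> \<not> determines n qs"
  shows "mmin n = k"
  unfolding mmin_def
  by (rule Least_equality) (use assms in \<open>auto simp: not_less[symmetric]\<close>)

theorem proposition4:
  shows "mmin 2 = 1 \<and> (\<forall>n::nat. n > 2 \<longrightarrow> mmin n = 2)"
proof
  show "mmin 2 = 1"
    using determines_two_single not_determines_Nil[of 2] by (intro mmin_eqI) auto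
  show "\<forall>n::nat. n > 2 \<longrightarrow> mmin n = 2"
  proof (intro allI impI)
    fix n :: nat assume "n > 2"
    then have n: "n \<ge> 3" by simp
    have short: "\<not> determines n qs" if len: "length qs < 2" for qs
    proof -
      consider "qs = []" | a b where "qs = [(a, b)]"
        using len by (cases qs) auto
      then show ?thesis
        using not_determines_Nil[of n] not_determines_single[OF n] n by cases auto
    qed
    show "mmin n = 2"
      using determines_alternating_pair[OF n] short by (intro mmin_eqI) auto
  qed
qed

end
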